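(* Fix integers $N\ge 2$ and $b_0\ge 1$ and a real number $m>1$, and set $q_k = 2/(2b_0 m^k-1)$ for $k\ge 0$. For each $K\in\{1,2,\dots\}$, let $\gamma=\gamma(K)\in(0,1)$ denote the solution of the fixed point equations $$\bar p=\frac{\sum_{k=0}^{K}\gamma^k}{\sum_{k=0}^{K}\gamma^k/q_k},\qquad \gamma=1-e^{-(N-1)\bar p}.$$ Then there exists a finite $K_0$ such that $\gamma(K_0)<1/m$, and $\gamma(K)$ is decreasing in $K$ for $K\ge K_0$. Consequently: (i) there exists $K_0$ such that $\gamma<1/m$ for all $K\ge K_0$, including $K=\infty$ (where $\gamma$ for $K=\infty$ is the limit of $\gamma(K)$ as $K\to\infty$); (ii) for $K=\infty$ the mean $\bar\Omega=\mathbb{E}[\Omega]=\sum_{k=0}^{\infty}\gamma^k/q_k$ of the per-packet backoff is finite.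
   Context: This models the backoff of IEEE 802.11 with $N$ saturated nodes, backoff stages $0,\dots,K$, multiplicative factor $m$ and initial contention window $2b_0$; $q_k$ is the attempt probability in stage $k$, $\bar p$ the average attempt rate and $\gamma$ the collision probability. The per-packet backoff is $\Omega=\sum_{k=0}^{\kappa}B_k$, where $B_k$ is the backoff value drawn at stage $k$ (mean $1/q_k$) and $\kappa$ is the highest stage reached by the packet, with $\mathbb{P}[\kappa=k]=\gamma^k-\gamma^{k+1}$ for $k<K$ and $\mathbb{P}[\kappa=K]=\gamma^K$; its mean is $\bar\Omega=\sum_{k=0}^{K}\gamma^k/q_k$. *)

theory Defs
  imports "HOL-Analysis.Analysis"
begin

definition attempt_prob :: "nat \<Rightarrow> real \<Rightarrow> nat \<Rightarrow> real" where
  "attempt_prob b0 m k = 2 / (2 * real b0 * m ^ k - 1)"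

definition avg_rate :: "nat \<Rightarrow> real \<Rightarrow> nat \<Rightarrow> real \<Rightarrow> real" where
  "avg_rate b0 m K g =
     (\<Sum>k\<le>K. g ^ k) / (\<Sum>k\<le>K. g ^ k / attempt_prob b0 m k)"

definition gamma_fp :: "nat \<Rightarrow> nat \<Rightarrow> real \<Rightarrow> nat \<Rightarrow> real" where
  "gamma_fp N b0 m K =
     (THE g. 0 < g \<and> g < 1 \<and>
             g = 1 - exp (- (real N - 1) * avg_rate b0 m K g))"

end

theory Submission
  imports Defs
begin

text \<open>
  Writing \<open>1/q\<^sub>k = b\<^sub>0 m\<^sup>k - 1/2\<close>, the average attempt rate \<open>p(\<gamma>)\<close> is the ratio of
  \<open>\<Sum> \<gamma>\<^sup>k\<close> to the truncated mean backoff \<open>\<Sum> \<gamma>\<^sup>k / q\<^sub>k\<close>. Since \<open>1/q\<^sub>k\<close> increases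
  with \<open>k\<close>, a Chebyshev-type inequality shows that this rate decreases in \<open>\<gamma>\<close>, so the
  collision map \<open>\<gamma> \<mapsto> 1 - exp (-(N-1) p(\<gamma>))\<close> is antitone and has a unique fixed
  point; adding a stage strictly lowers the rate, hence strictly lowers the fixed point.
  At \<open>\<gamma> = 1/m\<close> every term \<open>\<gamma>\<^sup>k/q\<^sub>k\<close> is at least \<open>1/2\<close> while \<open>\<Sum> \<gamma>\<^sup>k \<le> m/(m-1)\<close>, so
  the rate there is \<open>O(1/K)\<close> and the fixed point drops below \<open>1/m\<close> for large \<open>K\<close>.
  The decreasing limit \<open>\<gamma>\<^sub>\<infinity> < 1/m\<close> then makes \<open>\<Sum> \<gamma>\<^sub>\<infinity>\<^sup>k/q\<^sub>k\<close> a sum of two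
  convergent geometric series.
\<close>

lemma power_cross_le:
  fixes g h :: real
  assumes "i \<le> j" "0 \<le> g" "g \<le> h"
  shows "h ^ i * g ^ j \<le> g ^ i * h ^ j"
proof -
  obtain d where j: "j = i + d" using \<open>i \<le> j\<close> le_Suc_ex by blast
  have "g ^ d \<le> h ^ d" using assms by (simp add: power_mono)
  then have "g ^ i * h ^ i * g ^ d \<le> g ^ i * h ^ i * h ^ d" using assms by (simp add: mult_left_mono)
  then show ?thesis unfolding j by (simp add: power_add ac_simps)
qed

text \<open>The mean of a nondecreasing \<open>w\<close> under the weights \<open>g\<^sup>k\<close>, \<open>k \<le> K\<close>, is nondecreasing in \<open>g\<close>.\<close>
lemma sum_power_weighted_cross_le:
  fixes w :: "nat \<Rightarrow> real"
  assumes "mono w" "0 \<le> g" "g \<le> h"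
  shows "(\<Sum>k\<le>K. h ^ k) * (\<Sum>k\<le>K. g ^ k * w k) \<le> (\<Sum>k\<le>K. g ^ k) * (\<Sum>k\<le>K. h ^ k * w k)"
proof (induction K)
  case 0
  show ?case by simp
next
  case (Suc K)
  define Ag Ah Bg Bh where "Ag = (\<Sum>k\<le>K. g ^ k)" "Ah = (\<Sum>k\<le>K. h ^ k)"
    "Bg = (\<Sum>k\<le>K. g ^ k * w k)" "Bh = (\<Sum>k\<le>K. h ^ k * w k)"
  define G H W where "G = g ^ Suc K" "H = h ^ Suc K" "W = w (Suc K)"
  have new_terms: "0 \<le> W * H * Ag - H * Bg - W * G * Ah + G * Bh"
  proof -
    have "0 \<le> (\<Sum>k\<le>K. (W - w k) * (g ^ k * H - h ^ k * G))"
      using power_cross_le[of _ "Suc K", OF _ assms(2,3)] monoD[OF assms(1), of _ "Suc K"]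
      unfolding G_H_W_def by (intro sum_nonneg mult_nonneg_nonneg) auto
    also have "\<dots> = W * H * Ag - H * Bg - W * G * Ah + G * Bh"
      unfolding Ag_Ah_Bg_Bh_def
      by (simp add: algebra_simps sum.distrib sum_subtractf sum_distrib_left sum_distrib_right)
    finally show ?thesis .
  qed
  have "(Ah + H) * (Bg + G * W) \<le> (Ag + G) * (Bh + H * W)"
    using Suc.IH new_terms unfolding Ag_Ah_Bg_Bh_def by (simp add: algebra_simps)
  then show ?case unfolding Ag_Ah_Bg_Bh_def G_H_W_def by simp
qed

lemma antimono_on_unique_fixed_point:
  fixes f :: "real \<Rightarrow> real"
  assumes cont: "continuous_on {0..1} f" and anti: "antimono_on {0..1} f"
    and range: "\<And>x. x \<in> {0..1} \<Longrightarrow> f x \<in> {0<..<1}"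
  shows "\<exists>!x. 0 < x \<and> x < 1 \<and> x = f x"
proof -
  have "continuous_on {0..1} (\<lambda>x. f x - x)"
    using cont by (intro continuous_intros)
  moreover have "f 1 - 1 \<le> 0" "0 \<le> f 0 - 0" using range[of 0] range[of 1] by auto
  ultimately obtain x where x: "0 \<le> x" "x \<le> 1" "f x - x = 0"
    using IVT2'[of "\<lambda>x. f x - x" 1 0 0] by auto
  then have fixed: "0 < x \<and> x < 1 \<and> x = f x" using range[of x] by auto
  have not_less: "\<not> u < v" if "0 < u \<and> u < 1 \<and> u = f u" "0 < v \<and> v < 1 \<and> v = f v" for u v
    using monotone_onD[OF anti, of u v] that by auto
  show ?thesis
    using fixed not_less[OF fixed] not_less[of _ x, OF _ fixed] by (intro ex1I[of _ x]) force+
qed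

lemma fixed_point_less_if_map_less:
  fixes f g :: "real \<Rightarrow> real"
  assumes "antimono_on S g" "x \<in> S" "y \<in> S" "f x = x" "g y = y" "g x < f x"
  shows "y < x"
proof (rule ccontr)
  assume "\<not> y < x"
  then have "g y \<le> g x" using monotone_onD[OF assms(1-3)] by auto
  then show False using assms(4-6) \<open>\<not> y < x\<close> by linarith
qed

lemma sum_power_pos: "0 \<le> (g :: real) \<Longrightarrow> 0 < (\<Sum>k\<le>K. g ^ k)"
  by (rule sum_pos2[of _ 0]) auto

definition stage_backoff :: "nat \<Rightarrow> real \<Rightarrow> nat \<Rightarrow> real" where
  "stage_backoff b0 m k = real b0 * m ^ k - 1 / 2"

definition mean_backoff :: "nat \<Rightarrow> real \<Rightarrow> nat \<Rightarrow> real \<Rightarrow> real" where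
  "mean_backoff b0 m K g = (\<Sum>k\<le>K. g ^ k * stage_backoff b0 m k)"

definition collision_map :: "nat \<Rightarrow> nat \<Rightarrow> real \<Rightarrow> nat \<Rightarrow> real \<Rightarrow> real" where
  "collision_map N b0 m K g = 1 - exp (- (real N - 1) * avg_rate b0 m K g)"

lemma divide_attempt_prob: "g ^ k / attempt_prob b0 m k = g ^ k * stage_backoff b0 m k"
proof -
  have "2 * real b0 * m ^ k - 1 = 2 * stage_backoff b0 m k" unfolding stage_backoff_def by simp
  then show ?thesis unfolding attempt_prob_def by simp
qed

lemma avg_rate_eq: "avg_rate b0 m K g = (\<Sum>k\<le>K. g ^ k) / mean_backoff b0 m K g"
  unfolding avg_rate_def mean_backoff_def by (simp add: divide_attempt_prob)

lemma gamma_fp_eq_fixed_point: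
  "gamma_fp N b0 m K = (THE g. 0 < g \<and> g < 1 \<and> g = collision_map N b0 m K g)"
  unfolding gamma_fp_def collision_map_def ..

context
  fixes b0 :: nat and m :: real
  assumes b0: "b0 \<ge> 1" and m: "m > 1"
begin

lemma stage_backoff_ge: "m ^ k / 2 \<le> stage_backoff b0 m k"
proof -
  have "1 \<le> m ^ k" using m by simp
  moreover have "m ^ k \<le> real b0 * m ^ k" using b0 m by simp
  ultimately show ?thesis unfolding stage_backoff_def by linarith
qed

lemma stage_backoff_pos: "0 < stage_backoff b0 m k"
proof -
  have "0 < m ^ k / 2" using m by simp
  then show ?thesis using stage_backoff_ge by (rule less_le_trans)
qed

lemma strict_mono_stage_backoff: "strict_mono (stage_backoff b0 m)"
  unfolding strict_mono_def stage_backoff_def using b0 m by (simp add: power_strict_increasing)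

lemma mean_backoff_pos: "0 \<le> g \<Longrightarrow> 0 < mean_backoff b0 m K g"
  unfolding mean_backoff_def
  by (rule sum_pos2[of _ 0]) (auto intro: mult_nonneg_nonneg less_imp_le[OF stage_backoff_pos] stage_backoff_pos)

lemma avg_rate_pos: "0 \<le> g \<Longrightarrow> 0 < avg_rate b0 m K g"
  by (simp add: avg_rate_eq sum_power_pos mean_backoff_pos)

lemma avg_rate_antimono: "antimono_on {0..} (avg_rate b0 m K)"
proof (rule monotone_onI)
  fix g h :: real
  assume "g \<in> {0..}" "h \<in> {0..}" "g \<le> h"
  then have "(\<Sum>k\<le>K. h ^ k) * mean_backoff b0 m K g \<le> (\<Sum>k\<le>K. g ^ k) * mean_backoff b0 m K h"
    unfolding mean_backoff_def
    by (intro sum_power_weighted_cross_le strict_mono_mono strict_mono_stage_backoff) auto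
  then show "avg_rate b0 m K h \<le> avg_rate b0 m K g"
    using mean_backoff_pos[of g K] mean_backoff_pos[of h K] \<open>g \<in> {0..}\<close> \<open>h \<in> {0..}\<close>
    by (simp add: avg_rate_eq divide_simps mult.commute)
qed

lemma avg_rate_Suc_less:
  assumes "0 < g"
  shows "avg_rate b0 m (Suc K) g < avg_rate b0 m K g"
proof -
  define A B x v where "A = (\<Sum>k\<le>K. g ^ k)" "B = mean_backoff b0 m K g"
    "x = g ^ Suc K" "v = stage_backoff b0 m (Suc K)"
  have pos: "0 < A" "0 < B" "0 < x" "0 < v"
    unfolding A_B_x_v_def using assms sum_power_pos mean_backoff_pos stage_backoff_pos by auto
  have "B < (\<Sum>k\<le>K. g ^ k * v)"
    unfolding A_B_x_v_def mean_backoff_def using assms strict_mono_stage_backoff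
    by (intro sum_strict_mono mult_strict_left_mono) (auto simp: strict_mono_def)
  also have "\<dots> = A * v" unfolding A_B_x_v_def by (simp add: sum_distrib_right)
  finally have "(A + x) * B < A * (B + x * v)" using pos by (simp add: algebra_simps)
  moreover have "0 < B + x * v" using pos by (simp add: add_pos_pos)
  ultimately have "(A + x) / (B + x * v) < A / B" using pos by (simp add: divide_simps)
  moreover have "avg_rate b0 m (Suc K) g = (A + x) / (B + x * v)" "avg_rate b0 m K g = A / B"
    unfolding A_B_x_v_def avg_rate_eq mean_backoff_def by simp_all
  ultimately show ?thesis by simp
qed

text \<open>Each term \<open>m\<^sup>-\<^sup>k/q\<^sub>k\<close> is at least \<open>1/2\<close>, so the mean backoff grows linearly in \<open>K\<close>.\<close>
lemma avg_rate_inverse_le: "avg_rate b0 m K (1 / m) \<le> 2 * m / ((m - 1) * (real K + 1))"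
proof -
  have "(1 - 1 / m) * (\<Sum>k\<le>K. (1 / m) ^ k) \<le> 1"
    using sum_gp_basic[of "1 / m" K] m by simp
  then have sum_le: "(\<Sum>k\<le>K. (1 / m) ^ k) \<le> m / (m - 1)"
    using m by (simp add: field_simps)
  have "(\<Sum>k\<le>K. 1 / 2 :: real) \<le> mean_backoff b0 m K (1 / m)"
    unfolding mean_backoff_def
  proof (rule sum_mono)
    fix k
    have "1 / 2 = (1 / m) ^ k * (m ^ k / 2)" using m by (simp add: power_divide)
    also have "\<dots> \<le> (1 / m) ^ k * stage_backoff b0 m k"
      using m stage_backoff_ge by (intro mult_left_mono) auto
    finally show "1 / 2 \<le> (1 / m) ^ k * stage_backoff b0 m k" .
  qed
  then have "(real K + 1) / 2 \<le> mean_backoff b0 m K (1 / m)" by simp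
  with sum_le have "avg_rate b0 m K (1 / m) \<le> (m / (m - 1)) / ((real K + 1) / 2)"
    unfolding avg_rate_eq using m
    by (intro frac_le) (auto simp: sum_power_pos less_imp_le)
  then show ?thesis by (simp add: field_simps)
qed

lemma summable_stage_backoff:
  assumes "0 \<le> g" "g < 1 / m"
  shows "summable (\<lambda>k. g ^ k * stage_backoff b0 m k)"
proof -
  have gm: "g * m < 1" using assms m by (simp add: field_simps)
  have "g \<le> g * m" using assms(1) m by (simp add: mult_le_cancel_left1)
  with gm have "g < 1" by linarith
  have "(\<lambda>k. g ^ k * stage_backoff b0 m k) = (\<lambda>k. real b0 * (g * m) ^ k - 1 / 2 * g ^ k)"
    by (simp add: stage_backoff_def algebra_simps)
  then show ?thesis
    using assms m gm \<open>g < 1\<close> by (simp add: summable_diff summable_mult summable_geometric)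
qed

context
  fixes N :: nat
  assumes N: "N \<ge> 2"
begin

lemma collision_map_antimono: "antimono_on {0..} (collision_map N b0 m K)"
  using avg_rate_antimono N
  by (auto simp: monotone_on_def collision_map_def mult_left_mono)

lemma collision_map_Suc_less: "0 < g \<Longrightarrow> collision_map N b0 m (Suc K) g < collision_map N b0 m K g"
  unfolding collision_map_def using avg_rate_Suc_less[of g K] N by simp

lemma collision_map_bounds:
  assumes "0 \<le> g"
  shows "0 < collision_map N b0 m K g" "collision_map N b0 m K g \<le> (real N - 1) * avg_rate b0 m K g"
proof -
  have "0 < (real N - 1) * avg_rate b0 m K g" using avg_rate_pos[OF assms] N by simp
  then show "0 < collision_map N b0 m K g" unfolding collision_map_def mult_minus_left by simp
  show "collision_map N b0 m K g \<le> (real N - 1) * avg_rate b0 m K g"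
    unfolding collision_map_def mult_minus_left
    using exp_ge_add_one_self[of "- ((real N - 1) * avg_rate b0 m K g)"] by linarith
qed

lemma continuous_on_collision_map: "continuous_on {0..} (collision_map N b0 m K)"
proof -
  have "continuous_on {0..} (\<lambda>g. 1 - exp (- (real N - 1) * ((\<Sum>k\<le>K. g ^ k) / mean_backoff b0 m K g)))"
    using mean_backoff_pos unfolding mean_backoff_def
    by (intro continuous_intros) (auto simp: less_imp_neq[symmetric])
  then show ?thesis unfolding collision_map_def avg_rate_eq .
qed

lemma gamma_fp_fixed_point:
  shows gamma_fp_pos: "0 < gamma_fp N b0 m K" and gamma_fp_less_one: "gamma_fp N b0 m K < 1"
    and collision_map_gamma_fp: "collision_map N b0 m K (gamma_fp N b0 m K) = gamma_fp N b0 m K"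
proof -
  have "\<exists>!g. 0 < g \<and> g < 1 \<and> g = collision_map N b0 m K g"
  proof (rule antimono_on_unique_fixed_point)
    show "continuous_on {0..1} (collision_map N b0 m K)"
      using continuous_on_collision_map by (rule continuous_on_subset) auto
    show "antimono_on {0..1} (collision_map N b0 m K)"
      using collision_map_antimono by (rule monotone_on_subset) auto
    show "collision_map N b0 m K g \<in> {0<..<1}" if "g \<in> {0..1}" for g
      using that collision_map_bounds(1)[of g K] by (auto simp: collision_map_def)
  qed
  then have "0 < gamma_fp N b0 m K \<and> gamma_fp N b0 m K < 1 \<and>
      gamma_fp N b0 m K = collision_map N b0 m K (gamma_fp N b0 m K)"
    unfolding gamma_fp_eq_fixed_point by (rule theI')
  then show "0 < gamma_fp N b0 m K" "gamma_fp N b0 m K < 1"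
    "collision_map N b0 m K (gamma_fp N b0 m K) = gamma_fp N b0 m K"
    by simp_all
qed

lemma gamma_fp_Suc_less: "gamma_fp N b0 m (Suc K) < gamma_fp N b0 m K"
proof (rule fixed_point_less_if_map_less[OF collision_map_antimono])
  show "collision_map N b0 m (Suc K) (gamma_fp N b0 m K) < collision_map N b0 m K (gamma_fp N b0 m K)"
    by (rule collision_map_Suc_less[OF gamma_fp_pos])
qed (use gamma_fp_pos less_imp_le in \<open>auto simp: collision_map_gamma_fp\<close>)

lemma gamma_fp_less_inverse: "\<exists>K. gamma_fp N b0 m K < 1 / m"
proof -
  define C where "C = (real N - 1) * 2 * m / (m - 1)"
  obtain K :: nat where K: "C * m < real K" using reals_Archimedean2 by blast
  let ?g = "gamma_fp N b0 m K"
  have "?g < 1 / m" if ge: "1 / m \<le> ?g"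
  proof -
    have "?g \<le> (real N - 1) * avg_rate b0 m K ?g"
      using collision_map_bounds(2)[OF less_imp_le[OF gamma_fp_pos], of K K]
      by (simp add: collision_map_gamma_fp)
    also have "\<dots> \<le> (real N - 1) * avg_rate b0 m K (1 / m)"
      using monotone_onD[OF avg_rate_antimono, of "1 / m" ?g K] ge m N gamma_fp_pos
      by (intro mult_left_mono) (auto intro: less_imp_le)
    also have "\<dots> \<le> (real N - 1) * (2 * m / ((m - 1) * (real K + 1)))"
      using avg_rate_inverse_le N by (intro mult_left_mono) auto
    also have "\<dots> = C / (real K + 1)" unfolding C_def by (simp add: field_simps)
    also have "\<dots> < 1 / m" using K m by (simp add: field_simps)
    finally show ?thesis .
  qed
  then show ?thesis by (meson not_le)
qed

end

end

theorem lemma1: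
  fixes N b0 :: nat and m :: real
  assumes "N \<ge> 2" and "b0 \<ge> 1" and "m > 1"
  shows "(\<exists>K0\<ge>1. gamma_fp N b0 m K0 < 1 / m \<and>
            (\<forall>K\<ge>K0. gamma_fp N b0 m (Suc K) < gamma_fp N b0 m K))
       \<and> (\<exists>K0\<ge>1. \<forall>K\<ge>K0. gamma_fp N b0 m K < 1 / m)
       \<and> (\<exists>g_inf. (\<lambda>K. gamma_fp N b0 m K) \<longlonglongrightarrow> g_inf \<and> g_inf < 1 / m
              \<and> summable (\<lambda>k. g_inf ^ k / attempt_prob b0 m k))"
proof -
  let ?G = "gamma_fp N b0 m"
  note pos = gamma_fp_pos[OF assms(2,3,1)]
  have less_Suc: "?G (Suc K) < ?G K" for K using gamma_fp_Suc_less[OF assms(2,3,1)] .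
  then have dec: "decseq ?G" by (simp add: decseq_SucI less_imp_le)
  obtain K1 where "?G K1 < 1 / m" using gamma_fp_less_inverse[OF assms(2,3,1)] by blast
  then have K0: "?G (Suc K1) < 1 / m" using less_Suc[of K1] by linarith
  then have below: "\<forall>K\<ge>Suc K1. ?G K < 1 / m" using decseqD[OF dec] by (meson le_less_trans)
  obtain L where L: "?G \<longlonglongrightarrow> L" "\<forall>i. L \<le> ?G i"
    using decseq_convergent[OF dec, of 0] pos less_imp_le by blast
  have "0 \<le> L" using pos by (intro LIMSEQ_le_const[OF L(1)]) (auto intro: less_imp_le)
  moreover have "L < 1 / m" using L(2) K0 by (meson le_less_trans)
  ultimately have "summable (\<lambda>k. L ^ k / attempt_prob b0 m k)"
    unfolding divide_attempt_prob by (rule summable_stage_backoff[OF assms(2,3)])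
  then show ?thesis
    using K0 less_Suc below L(1) \<open>L < 1 / m\<close> by (intro conjI exI[of _ "Suc K1"] exI[of _ L]) auto
qed

end
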